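(* Let $\mathcal F_0\subset\mathcal F^d_{bm}(\mathbf I)$ be the subspace $\mathcal F_0=\mathrm{span}\{\Omega,\ g_{\xi_n}\otimes\cdots\otimes g_{\xi_1}: n\in\mathbb N,\ \xi_n\succ\xi_{n-1}\succ\cdots\succ\xi_1\text{ in }\mathbf I\}$. Each of $A^+_\xi,A^-_\xi,A^\circ_\xi$ preserves $\mathcal F_0$; let $\mathtt B^\varepsilon_\xi$ denote the restriction of $A^\varepsilon_\xi$ to $\mathcal F_0$ ($\varepsilon\in\{+,-,\circ\}$), so that $\mathtt B^\circ_\xi=\mathtt B^+_\xi\mathtt B^-_\xi$. Let $\mathcal C$ be the algebra of bounded operators on (the closure of) $\mathcal F_0$, $\varphi(X)=\langle X\Omega,\Omega\rangle$ the vacuum state, and $\mathcal C_\xi$ the $*$-algebra generated by $\mathtt B^+_\xi,\mathtt B^-_\xi,\mathtt B^\circ_\xi$. Then $\{\mathcal C_\xi:\xi\in\mathbf I\}$ is bm-independent in $(\mathcal C,\varphi)$ with respect to the poset $(\mathbf I,\preceq)$.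
   Context: Cones and index sets: fix $d\in\mathbb N$ and one of the following three cases. (a) $\Pi_d=\mathbb R_+^d\subset\mathbb R^d$ with coordinatewise order, and $\mathbf I=\mathbb N^d$. (b) The Lorentz cone $\Pi_d=\Lambda^1_d=\{(t;x)\in\mathbb R\times\mathbb R^d: t\ge\|x\|\}$, with $(s;y)\preceq(t;x)$ iff $t-s\ge\|x-y\|$, and $\mathbf I=\mathbb N\times\mathbb Z^d$. (c) $\Pi_d$ the cone of positive semidefinite real symmetric $d\times d$ matrices, with $\rho\preceq\xi$ iff $\xi-\rho$ is positive semidefinite, and $\mathbf I$ the set of positive semidefinite symmetric $d\times d$ matrices with integer entries. Write $\xi\prec\rho$ if $\xi\preceq\rho$ and $\xi\neq\rho$; $\xi\nsim\rho$ if incomparable. Discrete bm-Fock space: for each $\xi\in\mathbf I$ let $\mathcal H_\xi$ be a Hilbert space with orthonormal basis $\{e^m_\xi: m\ge0\}$, where $\Omega:=e^0_\xi$ is a common unit vector for all $\xi$. $\mathcal F^d_{bm}(\mathbf I)$ is the Hilbert space spanned by $\Omega$ and simple tensors $h_{\rho_n}\otimes\cdots\otimes h_{\rho_1}$ with $\rho_n\succ\cdots\succ\rho_1$ in $\mathbf I$, $h_{\rho_i}\in\mathcal H_{\rho_i}$, $h_{\rho_i}\perp\Omega$; tensors of different length or different index sequences are orthogonal, $\Omega$ is orthogonal to all tensors, and $\langle h_{\rho_n}\otimes\cdots\otimes h_{\rho_1},f_{\rho_n}\otimes\cdots\otimes f_{\rho_1}\rangle=\prod_i\langle h_{\rho_i},f_{\rho_i}\rangle$.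 Fix unit vectors $g_\xi\in\mathcal H_\xi$, $g_\xi\perp\Omega$. Creation: $A^+_\xi\Omega=g_\xi$, $A^+_\xi(h_{\rho_n}\otimes\cdots\otimes h_{\rho_1})=g_\xi\otimes h_{\rho_n}\otimes\cdots\otimes h_{\rho_1}$ if $\xi\succ\rho_n$, else $0$. Annihilation: $A^-_\xi\Omega=0$, $A^-_\xi(h_{\rho_n}\otimes\cdots\otimes h_{\rho_1})=\langle g_\xi,h_{\rho_n}\rangle h_{\rho_{n-1}}\otimes\cdots\otimes h_{\rho_1}$ if $\xi=\rho_n$ (giving $\langle g_\xi,h_{\rho_1}\rangle\Omega$ when $n=1$), else $0$. Conservation: $A^\circ_\xi\Omega=0$, $A^\circ_\xi(h_{\rho_n}\otimes\cdots\otimes h_{\rho_1})=\langle g_\xi,h_{\rho_n}\rangle h_{\rho_n}\otimes\cdots\otimes h_{\rho_1}$ if $\xi=\rho_n$, else $0$. bm-independence: for $(\mathcal A,\varphi)$ an algebra with a state and a poset $(\mathbb X,\preceq)$, subalgebras $\{\mathcal A_\xi\}$ are bm-independent if: (BM1) whenever $\xi\prec\rho\succ\eta$, or $\xi\nsim\rho\succ\eta$, or $\xi\prec\rho\nsim\eta$, then $a_1a_2a_3=\varphi(a_2)a_1a_3$ for all $a_1\in\mathcal A_\xi,a_2\in\mathcal A_\rho,a_3\in\mathcal A_\eta$; (BM2) whenever $\xi_1\succ\cdots\succ\xi_m\nsim\cdots\nsim\xi_k\prec\xi_{k+1}\prec\cdots\prec\xi_n$ for some $1\le m\le k\le n$ and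 $a_j\in\mathcal A_{\xi_j}$, then $\varphi(a_1\cdots a_n)=\prod_j\varphi(a_j)$. *)

theory Defs
  imports "HOL-Analysis.Analysis"
begin

definition strict :: "('i \<Rightarrow> 'i \<Rightarrow> bool) \<Rightarrow> 'i \<Rightarrow> 'i \<Rightarrow> bool" where
  "strict le x y \<longleftrightarrow> le x y \<and> x \<noteq> y"

definition incomp :: "('i \<Rightarrow> 'i \<Rightarrow> bool) \<Rightarrow> 'i \<Rightarrow> 'i \<Rightarrow> bool" where
  "incomp le x y \<longleftrightarrow> \<not> le x y \<and> \<not> le y x"

text \<open>A chain [rho_n, ..., rho_1] with rho_n > ... > rho_1 in I (head = largest element).
  The empty chain indexes the vacuum Omega.\<close>

definition is_chain :: "'i set \<Rightarrow> ('i \<Rightarrow> 'i \<Rightarrow> bool) \<Rightarrow> 'i list \<Rightarrow> bool" where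
  "is_chain I le c \<longleftrightarrow> set c \<subseteq> I \<and> sorted_wrt (\<lambda>a b. strict le b a) c"

text \<open>F_0 is identified (unitarily) with the finitely supported complex functions on chains:
  the chain c corresponds to the orthonormal vector g_{rho_n} (x) ... (x) g_{rho_1}, and [] to Omega.\<close>

type_synonym 'i vec = "'i list \<Rightarrow> complex"
type_synonym 'i op = "'i vec \<Rightarrow> 'i vec"

definition F0 :: "'i set \<Rightarrow> ('i \<Rightarrow> 'i \<Rightarrow> bool) \<Rightarrow> 'i vec set" where
  "F0 I le = {v. finite {c. v c \<noteq> 0} \<and> (\<forall>c. v c \<noteq> 0 \<longrightarrow> is_chain I le c)}"

definition inner_F :: "'i vec \<Rightarrow> 'i vec \<Rightarrow> complex" where
  "inner_F u v = (\<Sum>c\<in>{c. u c \<noteq> 0}. u c * cnj (v c))"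

definition vac :: "'i vec" where
  "vac = (\<lambda>c. if c = [] then 1 else 0)"

definition Bp :: "'i set \<Rightarrow> ('i \<Rightarrow> 'i \<Rightarrow> bool) \<Rightarrow> 'i \<Rightarrow> 'i op" where
  "Bp I le \<xi> v = (\<lambda>d. case d of [] \<Rightarrow> 0
      | x # c \<Rightarrow> (if x = \<xi> \<and> is_chain I le d then v c else 0))"

definition Bm :: "'i set \<Rightarrow> ('i \<Rightarrow> 'i \<Rightarrow> bool) \<Rightarrow> 'i \<Rightarrow> 'i op" where
  "Bm I le \<xi> v = (\<lambda>c. if is_chain I le (\<xi> # c) then v (\<xi> # c) else 0)"

definition Bo :: "'i set \<Rightarrow> ('i \<Rightarrow> 'i \<Rightarrow> bool) \<Rightarrow> 'i \<Rightarrow> 'i op" where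
  "Bo I le \<xi> v = (\<lambda>d. case d of [] \<Rightarrow> 0
      | x # c \<Rightarrow> (if x = \<xi> \<and> is_chain I le d then v d else 0))"

definition vstate :: "'i op \<Rightarrow> complex" where
  "vstate X = inner_F (X vac) vac"

text \<open>The *-algebra C_xi generated by Bp, Bm, Bo (non-unital), as operators on F_0.
  Closure under * : if S is an operator on F_0 which is the adjoint of a on F_0, then S is in.\<close>

inductive_set Calg :: "'i set \<Rightarrow> ('i \<Rightarrow> 'i \<Rightarrow> bool) \<Rightarrow> 'i \<Rightarrow> 'i op set"
  for I le \<xi> where
  gen_p: "Bp I le \<xi> \<in> Calg I le \<xi>"
| gen_m: "Bm I le \<xi> \<in> Calg I le \<xi>"
| gen_o: "Bo I le \<xi> \<in> Calg I le \<xi>"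
| add: "a \<in> Calg I le \<xi> \<Longrightarrow> b \<in> Calg I le \<xi> \<Longrightarrow> (\<lambda>v c. a v c + b v c) \<in> Calg I le \<xi>"
| smult: "a \<in> Calg I le \<xi> \<Longrightarrow> (\<lambda>v c. z * a v c) \<in> Calg I le \<xi>"
| mult: "a \<in> Calg I le \<xi> \<Longrightarrow> b \<in> Calg I le \<xi> \<Longrightarrow> a \<circ> b \<in> Calg I le \<xi>"
| adj: "a \<in> Calg I le \<xi> \<Longrightarrow> (\<forall>v\<in>F0 I le. S v \<in> F0 I le) \<Longrightarrow>
        (\<forall>x\<in>F0 I le. \<forall>y\<in>F0 I le. inner_F (a x) y = inner_F x (S y)) \<Longrightarrow> S \<in> Calg I le \<xi>"

text \<open>bm-independence of the family Calg in (C, vacuum state); equality in C is equality on F_0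
  (equivalently on its closure, the operators being bounded).\<close>

definition op_eq :: "'i set \<Rightarrow> ('i \<Rightarrow> 'i \<Rightarrow> bool) \<Rightarrow> 'i op \<Rightarrow> 'i op \<Rightarrow> bool" where
  "op_eq I le A B \<longleftrightarrow> (\<forall>v\<in>F0 I le. A v = B v)"

definition BM1 :: "'i set \<Rightarrow> ('i \<Rightarrow> 'i \<Rightarrow> bool) \<Rightarrow> ('i \<Rightarrow> 'i op set) \<Rightarrow> bool" where
  "BM1 I le A \<longleftrightarrow>
    (\<forall>\<xi>\<in>I. \<forall>\<rho>\<in>I. \<forall>\<eta>\<in>I.
       ((strict le \<xi> \<rho> \<and> strict le \<eta> \<rho>) \<or> (incomp le \<xi> \<rho> \<and> strict le \<eta> \<rho>)
         \<or> (strict le \<xi> \<rho> \<and> incomp le \<rho> \<eta>)) \<longrightarrow>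
       (\<forall>a1\<in>A \<xi>. \<forall>a2\<in>A \<rho>. \<forall>a3\<in>A \<eta>.
          op_eq I le (a1 \<circ> a2 \<circ> a3) (\<lambda>v c. vstate a2 * (a1 \<circ> a3) v c)))"

definition BM2 :: "'i set \<Rightarrow> ('i \<Rightarrow> 'i \<Rightarrow> bool) \<Rightarrow> ('i \<Rightarrow> 'i op set) \<Rightarrow> bool" where
  "BM2 I le A \<longleftrightarrow>
    (\<forall>xs :: 'i list. \<forall>as :: 'i op list. \<forall>m k.
       length as = length xs \<and> set xs \<subseteq> I \<and> m \<le> k \<and> k < length xs \<and>
       (\<forall>j<m. strict le (xs ! (j+1)) (xs ! j)) \<and>
       (\<forall>j. m \<le> j \<and> j < k \<longrightarrow> incomp le (xs ! j) (xs ! (j+1))) \<and>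
       (\<forall>j. k \<le> j \<and> j + 1 < length xs \<longrightarrow> strict le (xs ! j) (xs ! (j+1))) \<and>
       (\<forall>j<length xs. as ! j \<in> A (xs ! j))
       \<longrightarrow> vstate (foldr (\<circ>) as id) = prod_list (map vstate as))"

definition bm_independent :: "'i set \<Rightarrow> ('i \<Rightarrow> 'i \<Rightarrow> bool) \<Rightarrow> ('i \<Rightarrow> 'i op set) \<Rightarrow> bool" where
  "bm_independent I le A \<longleftrightarrow> BM1 I le A \<and> BM2 I le A"

section \<open>The three concrete index sets (vectors / matrices of dimension d as functions with
  zero outside indices < d)\<close>

definition I_a :: "nat \<Rightarrow> (nat \<Rightarrow> nat) set" where
  "I_a d = {x. \<forall>i\<ge>d. x i = 0}"
definition le_a :: "nat \<Rightarrow> (nat \<Rightarrow> nat) \<Rightarrow> (nat \<Rightarrow> nat) \<Rightarrow> bool" where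
  "le_a d x y \<longleftrightarrow> (\<forall>i<d. x i \<le> y i)"

definition I_b :: "nat \<Rightarrow> (nat \<times> (nat \<Rightarrow> int)) set" where
  "I_b d = {(t, x). \<forall>i\<ge>d. x i = 0}"
definition le_b :: "nat \<Rightarrow> nat \<times> (nat \<Rightarrow> int) \<Rightarrow> nat \<times> (nat \<Rightarrow> int) \<Rightarrow> bool" where
  "le_b d p q \<longleftrightarrow> (case p of (s, y) \<Rightarrow> case q of (t, x) \<Rightarrow>
      real t - real s \<ge> sqrt (\<Sum>i<d. (real_of_int (x i - y i))\<^sup>2))"

definition psd :: "nat \<Rightarrow> (nat \<Rightarrow> nat \<Rightarrow> real) \<Rightarrow> bool" where
  "psd d M \<longleftrightarrow> (\<forall>v :: nat \<Rightarrow> real. (\<Sum>i<d. \<Sum>j<d. v i * M i j * v j) \<ge> 0)"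
definition I_c :: "nat \<Rightarrow> (nat \<Rightarrow> nat \<Rightarrow> int) set" where
  "I_c d = {M. (\<forall>i j. (i \<ge> d \<or> j \<ge> d) \<longrightarrow> M i j = 0) \<and> (\<forall>i j. M i j = M j i)
             \<and> psd d (\<lambda>i j. real_of_int (M i j))}"
definition le_c :: "nat \<Rightarrow> (nat \<Rightarrow> nat \<Rightarrow> int) \<Rightarrow> (nat \<Rightarrow> nat \<Rightarrow> int) \<Rightarrow> bool" where
  "le_c d R X \<longleftrightarrow> psd d (\<lambda>i j. real_of_int (X i j - R i j))"

end

theory Submission
  imports Defs
begin

text \<open>Fix an index \<open>\<xi>\<close>. Every chain \<open>c\<close> to which \<open>\<xi>\<close> can be prepended is paired with
  \<open>\<xi> # c\<close>; the creation, annihilation and conservation operators at \<open>\<xi>\<close> act on each plane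
  spanned by the basis vectors of \<open>c\<close> and \<open>\<xi> # c\<close> by matrix units and kill all other
  chains. Hence every element of the generated *-algebra acts by one and the same 2\<times>2 matrix
  \<open>((p, q), (r, s))\<close> on all these planes, and its vacuum expectation is \<open>p\<close>.

  For BM1, in each of the three order configurations the middle factor only meets chains on
  which it acts as the scalar \<open>p\<close>. For BM2, apply the word to the vacuum from the right. While
  the indices are unrelated or increasing, the vector stays in the span of the vacuum and the
  one-particle vector of the current index; once they strictly decrease, all non-vacuum components
  live on chains whose smallest element lies below the current index. In both phases the next
  factor cannot annihilate anything back onto the vacuum, so at each step the vacuum coefficient
  is just multiplied by the vacuum expectation of that factor.\<close>

definition extendable :: "'i set \<Rightarrow> ('i \<Rightarrow> 'i \<Rightarrow> bool) \<Rightarrow> 'i \<Rightarrow> 'i list \<Rightarrow> bool" where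
  "extendable I le \<xi> c \<longleftrightarrow> is_chain I le c \<and> (c = [] \<or> strict le (hd c) \<xi>)"

definition headed :: "'i set \<Rightarrow> ('i \<Rightarrow> 'i \<Rightarrow> bool) \<Rightarrow> 'i \<Rightarrow> 'i list \<Rightarrow> bool" where
  "headed I le \<xi> c \<longleftrightarrow> is_chain I le c \<and> c \<noteq> [] \<and> hd c = \<xi>"

definition block_op ::
    "'i set \<Rightarrow> ('i \<Rightarrow> 'i \<Rightarrow> bool) \<Rightarrow> 'i \<Rightarrow> complex \<Rightarrow> complex \<Rightarrow> complex \<Rightarrow> complex \<Rightarrow> 'i op" where
  "block_op I le \<xi> p q r s v = (\<lambda>c.
      if extendable I le \<xi> c then p * v c + q * v (\<xi> # c)
      else if headed I le \<xi> c then r * v (tl c) + s * v c else 0)"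

definition chain_vec :: "'i list \<Rightarrow> 'i vec" where
  "chain_vec c0 = (\<lambda>c. if c = c0 then 1 else 0)"

definition ends_below :: "('i \<Rightarrow> 'i \<Rightarrow> bool) \<Rightarrow> 'i \<Rightarrow> 'i list set" where
  "ends_below le \<theta> = {c. c = [] \<or> le (last c) \<theta>}"

definition word_op :: "('i \<times> 'i op) list \<Rightarrow> 'i op" where
  "word_op ps = foldr (\<circ>) (map snd ps) id"

lemma word_op_simps [simp]:
  "word_op [] = id"
  "word_op ((\<xi>, a) # ps) = a \<circ> word_op ps"
  by (simp_all add: word_op_def)

lemma word_op_append: "word_op (ps @ qs) = word_op ps \<circ> word_op qs"
  by (induction ps) auto

lemma is_chain_Nil [simp]: "is_chain I le []"
  by (simp add: is_chain_def)

lemma is_chain_Cons: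
  "is_chain I le (x # c) \<longleftrightarrow> x \<in> I \<and> is_chain I le c \<and> (\<forall>y\<in>set c. strict le y x)"
  unfolding is_chain_def by auto

lemma is_chain_hd_in: "is_chain I le c \<Longrightarrow> c \<noteq> [] \<Longrightarrow> hd c \<in> I"
  unfolding is_chain_def by (cases c) auto

lemma is_chain_last_in: "is_chain I le c \<Longrightarrow> c \<noteq> [] \<Longrightarrow> last c \<in> I"
  unfolding is_chain_def by auto

lemma extendable_not_headed: "extendable I le \<xi> c \<Longrightarrow> \<not> headed I le \<xi> c"
  unfolding extendable_def headed_def strict_def by auto

lemma extendable_Nil: "extendable I le \<xi> []"
  by (simp add: extendable_def)

lemma inner_F_eq_sum_superset:
  assumes "finite F" "{c. u c \<noteq> 0} \<subseteq> F"
  shows "inner_F u w = (\<Sum>c\<in>F. u c * cnj (w c))"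
  unfolding inner_F_def by (rule sum.mono_neutral_left) (use assms in auto)

lemma inner_F_chain_vec_pair:
  assumes "x \<noteq> z"
  shows "inner_F (\<lambda>c. \<alpha> * chain_vec x c + \<beta> * chain_vec z c) w = \<alpha> * cnj (w x) + \<beta> * cnj (w z)"
proof -
  have "inner_F (\<lambda>c. \<alpha> * chain_vec x c + \<beta> * chain_vec z c) w
      = (\<Sum>c\<in>{x, z}. (\<alpha> * chain_vec x c + \<beta> * chain_vec z c) * cnj (w c))"
    by (rule inner_F_eq_sum_superset) (auto simp: chain_vec_def split: if_splits)
  also have "\<dots> = \<alpha> * cnj (w x) + \<beta> * cnj (w z)"
    using assms by (simp add: chain_vec_def)
  finally show ?thesis .
qed

lemma inner_F_chain_vec: "inner_F (chain_vec c) w = cnj (w c)"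
proof -
  have "inner_F (chain_vec c) w = (\<Sum>x\<in>{c}. chain_vec c x * cnj (w x))"
    by (rule inner_F_eq_sum_superset) (auto simp: chain_vec_def split: if_splits)
  then show ?thesis by (simp add: chain_vec_def)
qed

lemma inner_F_zero_left [simp]: "inner_F (\<lambda>c. 0) w = 0"
  unfolding inner_F_def by simp

lemma vac_eq_chain_vec: "vac = chain_vec []"
  unfolding vac_def chain_vec_def by auto

lemma chain_vec_in_F0: "is_chain I le c \<Longrightarrow> chain_vec c \<in> F0 I le"
  unfolding F0_def chain_vec_def by auto

lemma vac_in_F0: "vac \<in> F0 I le"
  by (simp add: vac_eq_chain_vec chain_vec_in_F0)

lemma vstate_eq_Nil:
  assumes "X vac \<in> F0 I le"
  shows "vstate X = X vac []"
proof -
  let ?S = "{c. X vac c \<noteq> 0}"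
  have fin: "finite ?S" using assms unfolding F0_def by simp
  have "vstate X = (\<Sum>c\<in>insert [] ?S. X vac c * cnj (vac c))"
    unfolding vstate_def by (rule inner_F_eq_sum_superset) (use fin in auto)
  also have "\<dots> = X vac []"
    using fin by (simp add: vac_def sum.insert_if if_distrib sum.delta cong: if_cong)
  finally show ?thesis .
qed

locale poset =
  fixes I :: "'i set" and le :: "'i \<Rightarrow> 'i \<Rightarrow> bool"
  assumes refl: "x \<in> I \<Longrightarrow> le x x"
    and trans: "x \<in> I \<Longrightarrow> y \<in> I \<Longrightarrow> z \<in> I \<Longrightarrow> le x y \<Longrightarrow> le y z \<Longrightarrow> le x z"
    and antisym: "x \<in> I \<Longrightarrow> y \<in> I \<Longrightarrow> le x y \<Longrightarrow> le y x \<Longrightarrow> x = y"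
begin

lemma le_strict_trans:
  "x \<in> I \<Longrightarrow> y \<in> I \<Longrightarrow> z \<in> I \<Longrightarrow> le x y \<Longrightarrow> strict le y z \<Longrightarrow> strict le x z"
  unfolding strict_def using trans antisym by blast

lemma strict_not_le: "x \<in> I \<Longrightarrow> y \<in> I \<Longrightarrow> strict le x y \<Longrightarrow> \<not> le y x"
  unfolding strict_def using antisym by blast

lemma is_chain_Cons_iff_extendable:
  assumes "\<xi> \<in> I"
  shows "is_chain I le (\<xi> # c) \<longleftrightarrow> extendable I le \<xi> c"
proof
  assume "is_chain I le (\<xi> # c)"
  then show "extendable I le \<xi> c"
    unfolding extendable_def is_chain_Cons by (cases c) auto
next
  assume ext: "extendable I le \<xi> c"
  show "is_chain I le (\<xi> # c)"
  proof (cases c)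
    case (Cons h t)
    have chain: "is_chain I le (h # t)" and h: "strict le h \<xi>"
      using ext Cons unfolding extendable_def by auto
    have hI: "h \<in> I" using chain by (simp add: is_chain_Cons)
    have "strict le y \<xi>" if "y \<in> set (h # t)" for y
    proof (cases "y = h")
      case False
      then have "y \<in> I" "le y h"
        using chain that unfolding is_chain_Cons strict_def is_chain_def by auto
      then show ?thesis using le_strict_trans[OF _ hI assms _ h] by blast
    qed (use h in simp)
    with chain Cons assms show ?thesis by (simp add: is_chain_Cons)
  qed (use assms in \<open>simp add: is_chain_def\<close>)
qed

lemma headed_Cons: "\<xi> \<in> I \<Longrightarrow> extendable I le \<xi> c \<Longrightarrow> headed I le \<xi> (\<xi> # c)"
  using is_chain_Cons_iff_extendable unfolding headed_def by auto

lemma headed_tl: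
  assumes "\<xi> \<in> I" "headed I le \<xi> c"
  shows "extendable I le \<xi> (tl c)" "\<xi> # tl c = c"
proof -
  show eq: "\<xi> # tl c = c" using assms(2) unfolding headed_def by (cases c) auto
  show "extendable I le \<xi> (tl c)"
    using assms is_chain_Cons_iff_extendable eq unfolding headed_def by metis
qed

lemma block_op_comp:
  assumes "\<xi> \<in> I"
  shows "block_op I le \<xi> p q r s (block_op I le \<xi> p' q' r' s' v)
    = block_op I le \<xi> (p * p' + q * r') (p * q' + q * s') (r * p' + s * r') (r * q' + s * s') v"
proof (rule ext)
  fix c
  show "block_op I le \<xi> p q r s (block_op I le \<xi> p' q' r' s' v) c
    = block_op I le \<xi> (p * p' + q * r') (p * q' + q * s') (r * p' + s * r') (r * q' + s * s') v c"
  proof (cases "extendable I le \<xi> c")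
    case True
    then have hd: "headed I le \<xi> (\<xi> # c)" using headed_Cons assms by blast
    then have "\<not> extendable I le \<xi> (\<xi> # c)" using extendable_not_headed[of I le \<xi>] by blast
    with True hd show ?thesis by (simp add: block_op_def algebra_simps)
  next
    case False
    show ?thesis
    proof (cases "headed I le \<xi> c")
      case True
      then have "extendable I le \<xi> (tl c)" "\<xi> # tl c = c"
        using headed_tl assms by blast+
      with True False show ?thesis by (simp add: block_op_def algebra_simps)
    qed (use False in \<open>simp add: block_op_def\<close>)
  qed
qed

lemma block_op_nonzero:
  assumes "block_op I le \<xi> p q r s W c \<noteq> 0"
  shows "extendable I le \<xi> c \<and> (W c \<noteq> 0 \<or> W (\<xi> # c) \<noteq> 0)
    \<or> headed I le \<xi> c \<and> (W (tl c) \<noteq> 0 \<or> W c \<noteq> 0)"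
  using assms by (auto simp: block_op_def split: if_splits)

lemma block_op_chain: "block_op I le \<xi> p q r s v c \<noteq> 0 \<Longrightarrow> is_chain I le c"
  by (auto simp: block_op_def extendable_def headed_def split: if_splits)

lemma block_op_in_F0:
  assumes "\<xi> \<in> I" "v \<in> F0 I le"
  shows "block_op I le \<xi> p q r s v \<in> F0 I le"
proof -
  let ?S = "{c. v c \<noteq> 0}"
  have "c \<in> ?S \<union> tl ` ?S \<union> Cons \<xi> ` ?S" if "block_op I le \<xi> p q r s v c \<noteq> 0" for c
  proof -
    have "v c \<noteq> 0 \<or> v (\<xi> # c) \<noteq> 0 \<or> (headed I le \<xi> c \<and> v (tl c) \<noteq> 0)"
      using block_op_nonzero[OF that] by blast
    moreover have "headed I le \<xi> c \<Longrightarrow> c = \<xi> # tl c"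
      using headed_tl[OF assms(1)] by simp
    moreover have "c = tl (\<xi> # c)" by simp
    ultimately show ?thesis by blast
  qed
  then have "{c. block_op I le \<xi> p q r s v c \<noteq> 0} \<subseteq> ?S \<union> tl ` ?S \<union> Cons \<xi> ` ?S"
    by blast
  moreover have "finite ?S" using assms(2) unfolding F0_def by simp
  ultimately have "finite {c. block_op I le \<xi> p q r s v c \<noteq> 0}"
    by (meson finite_Un finite_imageI finite_subset)
  then show ?thesis unfolding F0_def using block_op_chain by blast
qed

lemma Bp_eq_block_op: "Bp I le \<xi> = block_op I le \<xi> 0 0 1 0"
proof (intro ext)
  fix v c
  show "Bp I le \<xi> v c = block_op I le \<xi> 0 0 1 0 v c"
  proof (cases "headed I le \<xi> c")
    case True
    then have "\<not> extendable I le \<xi> c" using extendable_not_headed[of I le \<xi>] by blast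
    with True show ?thesis by (auto simp: Bp_def block_op_def headed_def neq_Nil_conv)
  next
    case False
    then show ?thesis
      by (auto simp: Bp_def block_op_def headed_def extendable_def strict_def split: list.split)
  qed
qed

lemma Bo_eq_block_op: "Bo I le \<xi> = block_op I le \<xi> 0 0 0 1"
proof (intro ext)
  fix v c
  show "Bo I le \<xi> v c = block_op I le \<xi> 0 0 0 1 v c"
  proof (cases "headed I le \<xi> c")
    case True
    then have "\<not> extendable I le \<xi> c" using extendable_not_headed[of I le \<xi>] by blast
    with True show ?thesis by (auto simp: Bo_def block_op_def headed_def neq_Nil_conv)
  next
    case False
    then show ?thesis
      by (auto simp: Bo_def block_op_def headed_def extendable_def strict_def split: list.split)
  qed
qed

lemma Bm_eq_block_op: "\<xi> \<in> I \<Longrightarrow> Bm I le \<xi> = block_op I le \<xi> 0 1 0 0"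
  by (intro ext) (simp add: Bm_def block_op_def is_chain_Cons_iff_extendable)

lemma block_op_chain_vec_extendable:
  assumes "\<xi> \<in> I" "extendable I le \<xi> c"
  shows "block_op I le \<xi> p q r s (chain_vec c) = (\<lambda>d. p * chain_vec c d + r * chain_vec (\<xi> # c) d)"
proof (rule ext)
  fix d
  have hd: "headed I le \<xi> (\<xi> # c)" using headed_Cons assms by blast
  have nh: "\<not> headed I le \<xi> c" using extendable_not_headed[of I le \<xi>] assms(2) by blast
  show "block_op I le \<xi> p q r s (chain_vec c) d = p * chain_vec c d + r * chain_vec (\<xi> # c) d"
  proof (cases "extendable I le \<xi> d")
    case True
    then have "\<xi> # d \<noteq> c" using nh headed_Cons assms(1) by blast
    moreover have "d \<noteq> \<xi> # c" using True hd extendable_not_headed[of I le \<xi>] by blast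
    ultimately show ?thesis using True by (simp add: block_op_def chain_vec_def)
  next
    case False
    then have "d \<noteq> c" using assms by auto
    moreover have "headed I le \<xi> d \<Longrightarrow> tl d = c \<longleftrightarrow> d = \<xi> # c"
      using headed_tl assms(1) by fastforce
    ultimately show ?thesis using False hd by (auto simp: block_op_def chain_vec_def)
  qed
qed

lemma block_op_chain_vec_headed:
  assumes "\<xi> \<in> I" "headed I le \<xi> c"
  shows "block_op I le \<xi> p q r s (chain_vec c) = (\<lambda>d. q * chain_vec (tl c) d + s * chain_vec c d)"
proof (rule ext)
  fix d
  have ext: "extendable I le \<xi> (tl c)" and c: "\<xi> # tl c = c" using headed_tl assms by auto
  have ne: "\<not> extendable I le \<xi> c" using extendable_not_headed[of I le \<xi>] assms(2) by blast
  show "block_op I le \<xi> p q r s (chain_vec c) d = q * chain_vec (tl c) d + s * chain_vec c d"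
  proof (cases "extendable I le \<xi> d")
    case True
    then have "d \<noteq> c" using ne by auto
    moreover have "\<xi> # d = c \<longleftrightarrow> d = tl c" using c by auto
    ultimately show ?thesis using True by (simp add: block_op_def chain_vec_def)
  next
    case False
    then have "d \<noteq> tl c" using ext by auto
    moreover have "tl d \<noteq> c" if "headed I le \<xi> d"
      using headed_tl[OF assms(1) that] ne by metis
    ultimately show ?thesis using False assms(2) by (auto simp: block_op_def chain_vec_def)
  qed
qed

lemma block_op_chain_vec_other:
  assumes "\<xi> \<in> I" "\<not> extendable I le \<xi> c" "\<not> headed I le \<xi> c"
  shows "block_op I le \<xi> p q r s (chain_vec c) = (\<lambda>d. 0)"
proof (rule ext)
  fix d
  have "d \<noteq> c \<and> \<xi> # d \<noteq> c" if "extendable I le \<xi> d"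
    using assms that headed_Cons by blast
  moreover have "tl d \<noteq> c \<and> d \<noteq> c" if "headed I le \<xi> d"
    using assms that headed_tl by metis
  ultimately show "block_op I le \<xi> p q r s (chain_vec c) d = 0"
    by (auto simp: block_op_def chain_vec_def)
qed

lemma adjoint_block_op:
  assumes "\<xi> \<in> I" "y \<in> F0 I le" and S_F0: "\<forall>v\<in>F0 I le. S v \<in> F0 I le"
    and adj: "\<forall>x\<in>F0 I le. \<forall>y\<in>F0 I le. inner_F (block_op I le \<xi> p q r s x) y = inner_F x (S y)"
  shows "S y = block_op I le \<xi> (cnj p) (cnj r) (cnj q) (cnj s) y"
proof (rule ext)
  fix c
  show "S y c = block_op I le \<xi> (cnj p) (cnj r) (cnj q) (cnj s) y c"
  proof (cases "is_chain I le c")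
    case False
    then have "S y c = 0" using S_F0 assms(2) unfolding F0_def by auto
    moreover have "\<not> extendable I le \<xi> c" "\<not> headed I le \<xi> c"
      using False unfolding extendable_def headed_def by auto
    ultimately show ?thesis by (simp add: block_op_def)
  next
    case True
    then have "inner_F (block_op I le \<xi> p q r s (chain_vec c)) y = inner_F (chain_vec c) (S y)"
      using adj assms(2) chain_vec_in_F0 by blast
    then have Syc: "S y c = cnj (inner_F (block_op I le \<xi> p q r s (chain_vec c)) y)"
      by (simp add: inner_F_chain_vec)
    consider "extendable I le \<xi> c" | "headed I le \<xi> c"
      | "\<not> extendable I le \<xi> c" "\<not> headed I le \<xi> c" by blast
    then show ?thesis
    proof cases
      case 1
      moreover have "c \<noteq> \<xi> # c" by simp
      ultimately show ?thesis using Syc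
        using block_op_chain_vec_extendable[OF assms(1)]
        by (simp add: inner_F_chain_vec_pair block_op_def)
    next
      case 2
      moreover have "tl c \<noteq> c" using 2 unfolding headed_def by (cases c) auto
      moreover have "\<not> extendable I le \<xi> c" using 2 extendable_not_headed[of I le \<xi>] by blast
      ultimately show ?thesis using Syc
        using block_op_chain_vec_headed[OF assms(1)]
        by (simp add: inner_F_chain_vec_pair block_op_def)
    next
      case 3
      then show ?thesis using Syc block_op_chain_vec_other[OF assms(1)] by (simp add: block_op_def)
    qed
  qed
qed

lemma Calg_block_op:
  assumes "a \<in> Calg I le \<xi>" "\<xi> \<in> I"
  shows "\<exists>p q r s. \<forall>v\<in>F0 I le. a v = block_op I le \<xi> p q r s v"
  using assms(1)
proof induction
  case gen_p
  have "\<forall>v\<in>F0 I le. Bp I le \<xi> v = block_op I le \<xi> 0 0 1 0 v" by (simp add: Bp_eq_block_op)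
  then show ?case by blast
next
  case gen_m
  have "\<forall>v\<in>F0 I le. Bm I le \<xi> v = block_op I le \<xi> 0 1 0 0 v" by (simp add: Bm_eq_block_op assms(2))
  then show ?case by blast
next
  case gen_o
  have "\<forall>v\<in>F0 I le. Bo I le \<xi> v = block_op I le \<xi> 0 0 0 1 v" by (simp add: Bo_eq_block_op)
  then show ?case by blast
next
  case (add a b)
  then obtain p q r s p' q' r' s' where
      "\<forall>v\<in>F0 I le. a v = block_op I le \<xi> p q r s v"
      "\<forall>v\<in>F0 I le. b v = block_op I le \<xi> p' q' r' s' v"
    by blast
  then have "\<forall>v\<in>F0 I le. (\<lambda>c. a v c + b v c) = block_op I le \<xi> (p + p') (q + q') (r + r') (s + s') v"
    by (auto simp: block_op_def algebra_simps)
  then show ?case by blast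
next
  case (smult a z)
  then obtain p q r s where "\<forall>v\<in>F0 I le. a v = block_op I le \<xi> p q r s v" by blast
  then have "\<forall>v\<in>F0 I le. (\<lambda>c. z * a v c) = block_op I le \<xi> (z * p) (z * q) (z * r) (z * s) v"
    by (auto simp: block_op_def algebra_simps)
  then show ?case by blast
next
  case (mult a b)
  then obtain p q r s p' q' r' s' where
      "\<forall>v\<in>F0 I le. a v = block_op I le \<xi> p q r s v"
      "\<forall>v\<in>F0 I le. b v = block_op I le \<xi> p' q' r' s' v"
    by blast
  then have "\<forall>v\<in>F0 I le. (a \<circ> b) v
      = block_op I le \<xi> (p * p' + q * r') (p * q' + q * s') (r * p' + s * r') (r * q' + s * s') v"
    using block_op_in_F0[OF assms(2)] block_op_comp[OF assms(2)] by simp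
  then show ?case by blast
next
  case (adj a S)
  then obtain p q r s where "\<forall>v\<in>F0 I le. a v = block_op I le \<xi> p q r s v" by blast
  with adj.hyps(3) have
    "\<forall>x\<in>F0 I le. \<forall>y\<in>F0 I le. inner_F (block_op I le \<xi> p q r s x) y = inner_F x (S y)"
    by simp
  then have "\<forall>y\<in>F0 I le. S y = block_op I le \<xi> (cnj p) (cnj r) (cnj q) (cnj s) y"
    using adjoint_block_op[OF assms(2)] adj.hyps(2) by blast
  then show ?case by blast
qed

lemma Calg_in_F0: "a \<in> Calg I le \<xi> \<Longrightarrow> \<xi> \<in> I \<Longrightarrow> v \<in> F0 I le \<Longrightarrow> a v \<in> F0 I le"
  using Calg_block_op block_op_in_F0 by metis

lemma block_op_Nil: "block_op I le \<xi> p q r s v [] = p * v [] + q * v [\<xi>]"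
  by (simp add: block_op_def extendable_Nil)

lemma vstate_block_op:
  assumes "\<xi> \<in> I" "\<forall>v\<in>F0 I le. a v = block_op I le \<xi> p q r s v"
  shows "vstate a = p"
proof -
  have "a vac = block_op I le \<xi> p q r s vac" using assms(2) vac_in_F0 by blast
  then have "vstate a = block_op I le \<xi> p q r s vac []"
    using vstate_eq_Nil block_op_in_F0[OF assms(1) vac_in_F0] by metis
  then show ?thesis by (simp add: block_op_Nil vac_def)
qed

lemma extendable_or_headed_iff:
  assumes "\<xi> \<in> I"
  shows "extendable I le \<xi> e \<or> headed I le \<xi> e \<longleftrightarrow> is_chain I le e \<and> (e = [] \<or> le (hd e) \<xi>)"
  using refl[OF assms] unfolding extendable_def headed_def strict_def by blast

lemma block_op_local:
  assumes "\<xi> \<in> I" "\<And>e. extendable I le \<xi> e \<or> headed I le \<xi> e \<Longrightarrow> X e = k * Y e"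
  shows "block_op I le \<xi> p q r s X = (\<lambda>c. k * block_op I le \<xi> p q r s Y c)"
proof (rule ext)
  fix c
  show "block_op I le \<xi> p q r s X c = k * block_op I le \<xi> p q r s Y c"
  proof (cases "extendable I le \<xi> c")
    case True
    then have "headed I le \<xi> (\<xi> # c)" using headed_Cons assms(1) by blast
    with True show ?thesis using assms(2) by (simp add: block_op_def algebra_simps)
  next
    case False
    show ?thesis
    proof (cases "headed I le \<xi> c")
      case True
      then have "extendable I le \<xi> (tl c)" using headed_tl assms(1) by blast
      with True False show ?thesis using assms(2) by (simp add: block_op_def algebra_simps)
    qed (use False in \<open>simp add: block_op_def\<close>)
  qed
qed

lemma block_op_absorb:
  assumes "\<rho> \<in> I" "\<not> le \<rho> \<eta>" "\<not> headed I le \<rho> e"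
    and "extendable I le \<eta> e \<or> headed I le \<eta> e \<Longrightarrow> extendable I le \<rho> e"
  shows "block_op I le \<rho> p q r s (block_op I le \<eta> p' q' r' s' w) e
    = p * block_op I le \<eta> p' q' r' s' w e"
proof -
  have "\<not> extendable I le \<eta> (\<rho> # e)"
    using assms(2) unfolding extendable_def strict_def by auto
  moreover have "\<not> headed I le \<eta> (\<rho> # e)"
    using assms(2) refl[OF assms(1)] unfolding headed_def by auto
  ultimately have "block_op I le \<eta> p' q' r' s' w (\<rho> # e) = 0" by (simp add: block_op_def)
  then show ?thesis using assms(3,4) by (auto simp: block_op_def)
qed

lemma block_op_absorb_middle:
  assumes I: "\<xi> \<in> I" "\<rho> \<in> I" "\<eta> \<in> I"
    and order: "strict le \<xi> \<rho> \<and> strict le \<eta> \<rho> \<or> incomp le \<xi> \<rho> \<and> strict le \<eta> \<rho>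
      \<or> strict le \<xi> \<rho> \<and> incomp le \<rho> \<eta>"
    and e: "extendable I le \<xi> e \<or> headed I le \<xi> e"
  shows "block_op I le \<rho> p q r s (block_op I le \<eta> p' q' r' s' w) e
    = p * block_op I le \<eta> p' q' r' s' w e"
proof -
  have chain: "is_chain I le e" and below: "e \<noteq> [] \<Longrightarrow> le (hd e) \<xi>"
    using e extendable_or_headed_iff[OF I(1)] by auto
  have hd_I: "e \<noteq> [] \<Longrightarrow> hd e \<in> I" using chain is_chain_hd_in by blast
  from order consider "strict le \<eta> \<rho>" "\<not> le \<rho> \<xi>" | "strict le \<xi> \<rho>" "incomp le \<rho> \<eta>"
    using strict_not_le I unfolding incomp_def by blast
  then show ?thesis
  proof cases
    case 1
    have "\<not> headed I le \<rho> e" using 1(2) below unfolding headed_def by auto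
    moreover have "extendable I le \<rho> e" if "extendable I le \<eta> e \<or> headed I le \<eta> e"
      using that extendable_or_headed_iff[OF I(3)] le_strict_trans[OF hd_I I(3,2) _ 1(1)]
      unfolding extendable_def by blast
    ultimately show ?thesis using block_op_absorb I 1 strict_not_le by blast
  next
    case 2
    have "extendable I le \<rho> e"
      using chain below le_strict_trans[OF hd_I I(1,2) _ 2(1)] unfolding extendable_def by blast
    then show ?thesis
      using block_op_absorb I 2(2) extendable_not_headed[of I le \<rho>] unfolding incomp_def by blast
  qed
qed

lemma BM1_Calg: "BM1 I le (Calg I le)"
  unfolding BM1_def
proof (intro ballI impI)
  fix \<xi> \<rho> \<eta> a1 a2 a3
  assume I: "\<xi> \<in> I" "\<rho> \<in> I" "\<eta> \<in> I"
    and order: "strict le \<xi> \<rho> \<and> strict le \<eta> \<rho> \<or> incomp le \<xi> \<rho> \<and> strict le \<eta> \<rho>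
      \<or> strict le \<xi> \<rho> \<and> incomp le \<rho> \<eta>"
    and a: "a1 \<in> Calg I le \<xi>" "a2 \<in> Calg I le \<rho>" "a3 \<in> Calg I le \<eta>"
  obtain p q r s where a1: "\<forall>v\<in>F0 I le. a1 v = block_op I le \<xi> p q r s v"
    using Calg_block_op[OF a(1) I(1)] by blast
  obtain p2 q2 r2 s2 where a2: "\<forall>v\<in>F0 I le. a2 v = block_op I le \<rho> p2 q2 r2 s2 v"
    using Calg_block_op[OF a(2) I(2)] by blast
  obtain p3 q3 r3 s3 where a3: "\<forall>v\<in>F0 I le. a3 v = block_op I le \<eta> p3 q3 r3 s3 v"
    using Calg_block_op[OF a(3) I(3)] by blast
  show "op_eq I le (a1 \<circ> a2 \<circ> a3) (\<lambda>v c. vstate a2 * (a1 \<circ> a3) v c)"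
    unfolding op_eq_def
  proof
    fix v assume v: "v \<in> F0 I le"
    have v3: "a3 v \<in> F0 I le" using Calg_in_F0[OF a(3) I(3) v] .
    have v23: "a2 (a3 v) \<in> F0 I le" using Calg_in_F0[OF a(2) I(2) v3] .
    have "(a1 \<circ> a2 \<circ> a3) v
        = block_op I le \<xi> p q r s (block_op I le \<rho> p2 q2 r2 s2 (block_op I le \<eta> p3 q3 r3 s3 v))"
      using a1 a2 a3 v v3 v23 by simp
    also have "\<dots> = (\<lambda>c. p2 * block_op I le \<xi> p q r s (block_op I le \<eta> p3 q3 r3 s3 v) c)"
      using block_op_local[OF I(1)] block_op_absorb_middle[OF I order] by blast
    also have "\<dots> = (\<lambda>c. vstate a2 * (a1 \<circ> a3) v c)"
      using a1 a3 v v3 vstate_block_op[OF I(2) a2] by simp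
    finally show "(a1 \<circ> a2 \<circ> a3) v = (\<lambda>c. vstate a2 * (a1 \<circ> a3) v c)" .
  qed
qed

lemma block_op_support_singletons:
  assumes "\<xi> \<in> I" "{c. W c \<noteq> 0} \<subseteq> insert [] ((\<lambda>\<eta>. [\<eta>]) ` H)" "\<forall>\<eta>\<in>H. \<not> le \<eta> \<xi>"
  shows "{c. block_op I le \<xi> p q r s W c \<noteq> 0} \<subseteq> {[], [\<xi>]}"
proof
  fix c assume "c \<in> {c. block_op I le \<xi> p q r s W c \<noteq> 0}"
  then consider "extendable I le \<xi> c" "W c \<noteq> 0 \<or> W (\<xi> # c) \<noteq> 0"
    | "headed I le \<xi> c" "W (tl c) \<noteq> 0 \<or> W c \<noteq> 0"
    using block_op_nonzero by blast
  then show "c \<in> {[], [\<xi>]}"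
  proof cases
    case 1
    have "\<not> extendable I le \<xi> [\<eta>]" if "\<eta> \<in> H" for \<eta>
      using assms(3) that unfolding extendable_def strict_def by auto
    then show ?thesis using 1 assms(2) by auto
  next
    case 2
    have "\<not> headed I le \<xi> [\<xi>, \<eta>]" if "\<eta> \<in> H" for \<eta>
      using assms(3) that unfolding headed_def is_chain_def strict_def by auto
    moreover have "c = \<xi> # tl c" using 2(1) headed_tl[OF assms(1)] by simp
    ultimately show ?thesis using 2 assms(2) unfolding headed_def by (cases c) auto
  qed
qed

lemma block_op_support_ends_below:
  assumes "\<xi> \<in> I" "\<theta> \<in> I" "strict le \<theta> \<xi>" "{c. W c \<noteq> 0} \<subseteq> ends_below le \<theta>"
  shows "{c. block_op I le \<xi> p q r s W c \<noteq> 0} \<subseteq> ends_below le \<xi>"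
proof
  fix c assume c: "c \<in> {c. block_op I le \<xi> p q r s W c \<noteq> 0}"
  show "c \<in> ends_below le \<xi>"
  proof (cases "c = []")
    case False
    from c have "W c \<noteq> 0 \<or> W (\<xi> # c) \<noteq> 0 \<or> (headed I le \<xi> c \<and> W (tl c) \<noteq> 0)"
      using block_op_nonzero by blast
    moreover have "last (\<xi> # c) = last c" using False by simp
    moreover have "last c = (if tl c = [] then \<xi> else last (tl c))" if "headed I le \<xi> c"
      using headed_tl(2)[OF assms(1) that] by (metis last.simps)
    ultimately have "le (last c) \<theta> \<or> last c = \<xi>"
      using assms(4) False unfolding ends_below_def by (auto split: if_splits)
    moreover have "last c \<in> I" using block_op_chain c False is_chain_last_in by blast
    ultimately show ?thesis
      using assms trans refl unfolding ends_below_def strict_def by blast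
  qed (simp add: ends_below_def)
qed

lemma Calg_step_singletons:
  assumes "a \<in> Calg I le \<xi>" "\<xi> \<in> I" "W \<in> F0 I le"
    and "{c. W c \<noteq> 0} \<subseteq> insert [] ((\<lambda>\<eta>. [\<eta>]) ` H)" "\<forall>\<eta>\<in>H. \<not> le \<eta> \<xi>"
  shows "{c. a W c \<noteq> 0} \<subseteq> {[], [\<xi>]}" "a W [] = vstate a * W []"
proof -
  obtain p q r s where rep: "\<forall>v\<in>F0 I le. a v = block_op I le \<xi> p q r s v"
    using Calg_block_op[OF assms(1,2)] by blast
  show "{c. a W c \<noteq> 0} \<subseteq> {[], [\<xi>]}"
    using rep assms(3) block_op_support_singletons[OF assms(2,4,5)] by simp
  have "W [\<xi>] = 0" using assms(4,5) refl[OF assms(2)] by auto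
  then show "a W [] = vstate a * W []"
    using rep assms(3) vstate_block_op[OF assms(2) rep] by (simp add: block_op_Nil)
qed

lemma Calg_step_ends_below:
  assumes "a \<in> Calg I le \<xi>" "\<xi> \<in> I" "W \<in> F0 I le"
    and "\<theta> \<in> I" "strict le \<theta> \<xi>" "{c. W c \<noteq> 0} \<subseteq> ends_below le \<theta>"
  shows "{c. a W c \<noteq> 0} \<subseteq> ends_below le \<xi>" "a W [] = vstate a * W []"
proof -
  obtain p q r s where rep: "\<forall>v\<in>F0 I le. a v = block_op I le \<xi> p q r s v"
    using Calg_block_op[OF assms(1,2)] by blast
  show "{c. a W c \<noteq> 0} \<subseteq> ends_below le \<xi>"
    using rep assms(3) block_op_support_ends_below[OF assms(2,4,5,6)] by simp
  have "W [\<xi>] = 0" using assms(6) strict_not_le[OF assms(4,2,5)] by (auto simp: ends_below_def)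
  then show "a W [] = vstate a * W []"
    using rep assms(3) vstate_block_op[OF assms(2) rep] by (simp add: block_op_Nil)
qed

lemma word_op_in_F0:
  "\<forall>(\<xi>, a)\<in>set ps. \<xi> \<in> I \<and> a \<in> Calg I le \<xi> \<Longrightarrow> W \<in> F0 I le \<Longrightarrow> word_op ps W \<in> F0 I le"
  by (induction ps) (auto intro: Calg_in_F0)

lemma word_op_vac_unrelated:
  assumes "ps \<noteq> []" "\<forall>(\<xi>, a)\<in>set ps. \<xi> \<in> I \<and> a \<in> Calg I le \<xi>"
    and "successively (\<lambda>\<xi> \<eta>. \<not> le \<eta> \<xi>) (map fst ps)"
  shows "{c. word_op ps vac c \<noteq> 0} \<subseteq> {[], [fst (hd ps)]}
    \<and> word_op ps vac [] = prod_list (map (\<lambda>x. vstate (snd x)) ps)"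
  using assms
proof (induction ps rule: list_nonempty_induct)
  case (single x)
  obtain \<xi> a where x: "x = (\<xi>, a)" by fastforce
  have a: "a \<in> Calg I le \<xi>" "\<xi> \<in> I" using single.prems x by auto
  have "{c. vac c \<noteq> 0} \<subseteq> insert [] ((\<lambda>\<eta>. [\<eta>]) ` {})" by (auto simp: vac_def)
  from Calg_step_singletons[OF a vac_in_F0 this]
  have "{c. a vac c \<noteq> 0} \<subseteq> {[], [\<xi>]}" "a vac [] = vstate a" by (simp_all add: vac_def)
  then show ?case using x by simp
next
  case (cons x ps)
  obtain \<xi> a where x: "x = (\<xi>, a)" by fastforce
  let ?W = "word_op ps vac" and ?\<eta> = "fst (hd ps)"
  have hyps: "\<forall>(\<xi>, a)\<in>set ps. \<xi> \<in> I \<and> a \<in> Calg I le \<xi>" "successively (\<lambda>\<xi> \<eta>. \<not> le \<eta> \<xi>) (map fst ps)"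
    and unrel: "\<not> le ?\<eta> \<xi>" and a: "a \<in> Calg I le \<xi>" "\<xi> \<in> I"
    using cons.prems cons.hyps(1) x by (auto simp: successively_Cons hd_map)
  have IH: "{c. ?W c \<noteq> 0} \<subseteq> insert [] ((\<lambda>\<eta>. [\<eta>]) ` {?\<eta>})"
      "?W [] = prod_list (map (\<lambda>x. vstate (snd x)) ps)"
    using cons.IH[OF hyps] by auto
  have "?W \<in> F0 I le" using word_op_in_F0[OF hyps(1) vac_in_F0] .
  from Calg_step_singletons[OF a this IH(1)] unrel
  have "{c. a ?W c \<noteq> 0} \<subseteq> {[], [\<xi>]}" "a ?W [] = vstate a * ?W []" by blast+
  then show ?case using IH(2) x by simp
qed

lemma word_op_ends_below:
  assumes "\<forall>(\<xi>, a)\<in>set ps. \<xi> \<in> I \<and> a \<in> Calg I le \<xi>"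
    and "successively (\<lambda>\<xi> \<eta>. strict le \<eta> \<xi>) (map fst ps @ [\<theta>])"
    and "\<theta> \<in> I" "W \<in> F0 I le" "{c. W c \<noteq> 0} \<subseteq> ends_below le \<theta>"
  shows "{c. word_op ps W c \<noteq> 0} \<subseteq> ends_below le (hd (map fst ps @ [\<theta>]))
    \<and> word_op ps W [] = prod_list (map (\<lambda>x. vstate (snd x)) ps) * W []"
  using assms(1,2)
proof (induction ps)
  case Nil
  then show ?case using assms(5) by simp
next
  case (Cons x ps)
  obtain \<xi> a where x: "x = (\<xi>, a)" by fastforce
  let ?W = "word_op ps W" and ?\<theta> = "hd (map fst ps @ [\<theta>])"
  have hyps: "\<forall>(\<xi>, a)\<in>set ps. \<xi> \<in> I \<and> a \<in> Calg I le \<xi>"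
      "successively (\<lambda>\<xi> \<eta>. strict le \<eta> \<xi>) (map fst ps @ [\<theta>])"
    and below: "strict le ?\<theta> \<xi>" and a: "a \<in> Calg I le \<xi>" "\<xi> \<in> I"
    using Cons.prems x by (auto simp: successively_Cons)
  have IH: "{c. ?W c \<noteq> 0} \<subseteq> ends_below le ?\<theta>"
      "?W [] = prod_list (map (\<lambda>x. vstate (snd x)) ps) * W []"
    using Cons.IH[OF hyps] by auto
  have "?\<theta> \<in> I" using assms(3) hyps(1) by (cases ps) auto
  moreover have "?W \<in> F0 I le" using word_op_in_F0[OF hyps(1) assms(4)] .
  ultimately have "{c. a ?W c \<noteq> 0} \<subseteq> ends_below le \<xi>" "a ?W [] = vstate a * ?W []"
    using Calg_step_ends_below[OF a _ _ below IH(1)] by blast+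
  then show ?case using IH(2) x by (simp add: mult.assoc)
qed

lemma vstate_word_op:
  assumes "\<forall>(\<xi>, a)\<in>set (ps @ qs). \<xi> \<in> I \<and> a \<in> Calg I le \<xi>" "qs \<noteq> []"
    and "successively (\<lambda>\<xi> \<eta>. strict le \<eta> \<xi>) (map fst ps @ [fst (hd qs)])"
    and "successively (\<lambda>\<xi> \<eta>. \<not> le \<eta> \<xi>) (map fst qs)"
  shows "vstate (word_op (ps @ qs)) = prod_list (map (\<lambda>x. vstate (snd x)) (ps @ qs))"
proof -
  let ?\<theta> = "fst (hd qs)" and ?W = "word_op qs vac"
  have ps: "\<forall>(\<xi>, a)\<in>set ps. \<xi> \<in> I \<and> a \<in> Calg I le \<xi>"
    and qs: "\<forall>(\<xi>, a)\<in>set qs. \<xi> \<in> I \<and> a \<in> Calg I le \<xi>" using assms(1) by auto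
  have \<theta>: "?\<theta> \<in> I" using qs assms(2) by (cases qs) auto
  have W: "{c. ?W c \<noteq> 0} \<subseteq> {[], [?\<theta>]}" "?W [] = prod_list (map (\<lambda>x. vstate (snd x)) qs)"
    using word_op_vac_unrelated[OF assms(2) qs assms(4)] by auto
  then have "{c. ?W c \<noteq> 0} \<subseteq> ends_below le ?\<theta>"
    using refl[OF \<theta>] unfolding ends_below_def by auto
  then have "word_op ps ?W [] = prod_list (map (\<lambda>x. vstate (snd x)) ps) * ?W []"
    using word_op_ends_below[OF ps assms(3) \<theta> word_op_in_F0[OF qs vac_in_F0]] by blast
  moreover have "vstate (word_op (ps @ qs)) = word_op (ps @ qs) vac []"
    using vstate_eq_Nil word_op_in_F0[OF assms(1) vac_in_F0] by blast
  ultimately show ?thesis using W(2) by (simp add: word_op_append)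
qed

lemma BM2_Calg: "BM2 I le (Calg I le)"
  unfolding BM2_def
proof (intro allI impI, elim conjE)
  fix xs :: "'i list" and as :: "'i op list" and m k
  assume len: "length as = length xs" and xs: "set xs \<subseteq> I" and "m \<le> k" "k < length xs"
    and dec: "\<forall>j<m. strict le (xs ! (j + 1)) (xs ! j)"
    and unrel: "\<forall>j. m \<le> j \<and> j < k \<longrightarrow> incomp le (xs ! j) (xs ! (j + 1))"
    and incr: "\<forall>j. k \<le> j \<and> j + 1 < length xs \<longrightarrow> strict le (xs ! j) (xs ! (j + 1))"
    and as: "\<forall>j<length xs. as ! j \<in> Calg I le (xs ! j)"
  define ps where "ps = zip xs as"
  have m: "m < length xs" using \<open>m \<le> k\<close> \<open>k < length xs\<close> by simp
  have fst_ps: "map fst ps = xs" and snd_ps: "map snd ps = as" using len by (simp_all add: ps_def)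
  have ps: "\<forall>(\<xi>, a)\<in>set (take m ps @ drop m ps). \<xi> \<in> I \<and> a \<in> Calg I le \<xi>"
    using xs as len by (auto simp: ps_def set_zip)
  have "drop m ps \<noteq> []" and hd: "fst (hd (drop m ps)) = xs ! m"
    using m len by (simp_all add: ps_def hd_drop_conv_nth)
  moreover have "successively (\<lambda>\<xi> \<eta>. strict le \<eta> \<xi>) (map fst (take m ps) @ [xs ! m])"
    using dec m by (simp add: fst_ps take_map[symmetric] take_Suc_conv_app_nth[symmetric]
        successively_conv_nth)
  moreover have "\<not> le (xs ! Suc j) (xs ! j)" if "m \<le> j" "Suc j < length xs" for j
  proof (cases "j < k")
    case True
    then show ?thesis using unrel that unfolding incomp_def by simp
  next
    case False
    then show ?thesis using incr that strict_not_le xs nth_mem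
      by (metis Suc_eq_plus1 Suc_lessD not_le subsetD)
  qed
  then have "successively (\<lambda>\<xi> \<eta>. \<not> le \<eta> \<xi>) (map fst (drop m ps))"
    by (simp add: fst_ps drop_map[symmetric] successively_conv_nth)
  ultimately have "vstate (word_op ps) = prod_list (map (\<lambda>x. vstate (snd x)) ps)"
    using vstate_word_op[OF ps] by simp
  then show "vstate (foldr (\<circ>) as id) = prod_list (map vstate as)"
    by (simp add: word_op_def comp_def flip: snd_ps)
qed

lemma bm_independent_Calg: "bm_independent I le (Calg I le)"
  unfolding bm_independent_def using BM1_Calg BM2_Calg by blast

end

lemma poset_I_a: "poset (I_a d) (le_a d)"
proof
  fix x y z
  show "le_a d x x" by (simp add: le_a_def)
  show "le_a d x y \<Longrightarrow> le_a d y z \<Longrightarrow> le_a d x z"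
    unfolding le_a_def using order_trans by blast
  show "x \<in> I_a d \<Longrightarrow> y \<in> I_a d \<Longrightarrow> le_a d x y \<Longrightarrow> le_a d y x \<Longrightarrow> x = y"
  proof (rule ext)
    fix i
    assume "x \<in> I_a d" "y \<in> I_a d" "le_a d x y" "le_a d y x"
    then show "x i = y i" unfolding I_a_def le_a_def by (cases "i < d") (auto intro!: order_antisym)
  qed
qed

lemma le_b_iff:
  "le_b d (s, y) (t, x) \<longleftrightarrow> L2_set (\<lambda>i. real_of_int (x i - y i)) {..<d} \<le> real t - real s"
  by (simp add: le_b_def L2_set_def)

lemma poset_I_b: "poset (I_b d) (le_b d)"
proof
  fix a b c :: "nat \<times> (nat \<Rightarrow> int)"
  obtain s y t x u z where abc: "a = (s, y)" "b = (t, x)" "c = (u, z)"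
    by (metis surj_pair)
  show "le_b d a a" by (simp add: abc le_b_def)
  show "le_b d a b \<Longrightarrow> le_b d b c \<Longrightarrow> le_b d a c"
  proof -
    assume "le_b d a b" "le_b d b c"
    moreover have "L2_set (\<lambda>i. real_of_int (z i - y i)) {..<d}
        \<le> L2_set (\<lambda>i. real_of_int (z i - x i)) {..<d} + L2_set (\<lambda>i. real_of_int (x i - y i)) {..<d}"
      using L2_set_triangle_ineq[of "\<lambda>i. real_of_int (z i - x i)" "\<lambda>i. real_of_int (x i - y i)"]
      by simp
    ultimately show "le_b d a c" by (simp add: abc le_b_iff)
  qed
  show "a \<in> I_b d \<Longrightarrow> b \<in> I_b d \<Longrightarrow> le_b d a b \<Longrightarrow> le_b d b a \<Longrightarrow> a = b"
  proof -
    assume I: "a \<in> I_b d" "b \<in> I_b d" and "le_b d a b" "le_b d b a"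
    then have "L2_set (\<lambda>i. real_of_int (x i - y i)) {..<d} \<le> real t - real s"
      "L2_set (\<lambda>i. real_of_int (y i - x i)) {..<d} \<le> real s - real t"
      by (simp_all add: abc le_b_iff)
    moreover have "L2_set (\<lambda>i. real_of_int (y i - x i)) {..<d} \<ge> 0"
      "L2_set (\<lambda>i. real_of_int (x i - y i)) {..<d} \<ge> 0" by simp_all
    ultimately have "real t = real s" and L2: "L2_set (\<lambda>i. real_of_int (x i - y i)) {..<d} = 0"
      by linarith+
    then have "t = s" by simp
    have "x i = y i" if "i < d" for i using L2 that by (simp add: L2_set_eq_0_iff)
    moreover have "x i = y i" if "i \<ge> d" for i using I that by (simp add: abc I_b_def)
    ultimately show "a = b" using \<open>t = s\<close> abc by (metis not_le ext)
  qed
qed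

lemma psd_add: "psd d A \<Longrightarrow> psd d B \<Longrightarrow> psd d (\<lambda>i j. A i j + B i j)"
  unfolding psd_def by (simp add: distrib_left distrib_right sum.distrib add_nonneg_nonneg)

lemma quad_form_indicators:
  fixes M :: "nat \<Rightarrow> nat \<Rightarrow> real"
  assumes "a < d" "b < d"
  shows "(\<Sum>i<d. \<Sum>j<d. of_bool (i = a) * M i j * of_bool (j = b)) = M a b"
proof -
  have "(\<Sum>j<d. of_bool (i = a) * M i j * of_bool (j = b)) = (\<Sum>j<d. if j = b then of_bool (i = a) * M i j else 0)" for i
    by (rule sum.cong) auto
  then have "(\<Sum>i<d. \<Sum>j<d. of_bool (i = a) * M i j * of_bool (j = b)) = (\<Sum>i<d. if i = a then M i b else 0)"
    using assms(2) by (simp add: sum.delta)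
  also have "\<dots> = M a b" using assms(1) by (simp add: sum.delta)
  finally show ?thesis .
qed

lemma quad_form_add:
  fixes M :: "nat \<Rightarrow> nat \<Rightarrow> real"
  shows "(\<Sum>i<d. \<Sum>j<d. (f i + g i) * M i j * (f j + g j)) =
    (\<Sum>i<d. \<Sum>j<d. f i * M i j * f j) + (\<Sum>i<d. \<Sum>j<d. f i * M i j * g j)
    + (\<Sum>i<d. \<Sum>j<d. g i * M i j * f j) + (\<Sum>i<d. \<Sum>j<d. g i * M i j * g j)"
  by (simp add: algebra_simps sum.distrib)

lemma psd_neg_psd_eq_0:
  fixes D :: "nat \<Rightarrow> nat \<Rightarrow> real"
  assumes sym: "\<And>i j. D i j = D j i" and "psd d D" "psd d (\<lambda>i j. - D i j)" "a < d" "b < d"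
  shows "D a b = 0"
proof -
  have form_0: "(\<Sum>i<d. \<Sum>j<d. v i * D i j * v j) = 0" for v
  proof -
    have "(\<Sum>i<d. \<Sum>j<d. v i * - D i j * v j) = - (\<Sum>i<d. \<Sum>j<d. v i * D i j * v j)"
      by (simp add: sum_negf)
    moreover have "0 \<le> (\<Sum>i<d. \<Sum>j<d. v i * D i j * v j)"
      "0 \<le> (\<Sum>i<d. \<Sum>j<d. v i * - D i j * v j)"
      using assms(2,3) unfolding psd_def by blast+
    ultimately show ?thesis by linarith
  qed
  let ?e = "\<lambda>a k. of_bool (k = a) :: real"
  have diag: "D c c = 0" if "c < d" for c
    using form_0[of "?e c"] quad_form_indicators[OF that that] by simp
  have "0 = (\<Sum>i<d. \<Sum>j<d. (?e a i + ?e b i) * D i j * (?e a j + ?e b j))"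
    using form_0[of "\<lambda>k. ?e a k + ?e b k"] by simp
  also have "\<dots> = D a a + D a b + D b a + D b b"
    unfolding quad_form_add quad_form_indicators[OF assms(4) assms(4)]
      quad_form_indicators[OF assms(4) assms(5)] quad_form_indicators[OF assms(5) assms(4)]
      quad_form_indicators[OF assms(5) assms(5)] ..
  finally show ?thesis using diag assms(4,5) sym[of a b] by simp
qed

lemma poset_I_c: "poset (I_c d) (le_c d)"
proof
  fix X Y Z
  show "le_c d X X" by (simp add: le_c_def psd_def)
  show "le_c d X Y \<Longrightarrow> le_c d Y Z \<Longrightarrow> le_c d X Z"
    unfolding le_c_def by (drule (1) psd_add) simp
  show "X \<in> I_c d \<Longrightarrow> Y \<in> I_c d \<Longrightarrow> le_c d X Y \<Longrightarrow> le_c d Y X \<Longrightarrow> X = Y"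
  proof (intro ext)
    fix i j
    assume I: "X \<in> I_c d" "Y \<in> I_c d" and "le_c d X Y" "le_c d Y X"
    then have "psd d (\<lambda>i j. real_of_int (Y i j - X i j))"
      "psd d (\<lambda>i j. - real_of_int (Y i j - X i j))"
      unfolding le_c_def by simp_all
    moreover have "real_of_int (Y i j - X i j) = real_of_int (Y j i - X j i)" for i j
      using I unfolding I_c_def by simp
    ultimately have "i < d \<Longrightarrow> j < d \<Longrightarrow> X i j = Y i j"
      using psd_neg_psd_eq_0[of "\<lambda>i j. real_of_int (Y i j - X i j)" d i j] by simp
    moreover have "\<not> (i < d \<and> j < d) \<Longrightarrow> X i j = Y i j"
      using I unfolding I_c_def by auto
    ultimately show "X i j = Y i j" by blast
  qed
qed

theorem corollary3p4:
  fixes d :: nat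
  assumes "1 \<le> d"
  shows "bm_independent (I_a d) (le_a d) (Calg (I_a d) (le_a d))
       \<and> bm_independent (I_b d) (le_b d) (Calg (I_b d) (le_b d))
       \<and> bm_independent (I_c d) (le_c d) (Calg (I_c d) (le_c d))"
  using poset.bm_independent_Calg[OF poset_I_a] poset.bm_independent_Calg[OF poset_I_b]
    poset.bm_independent_Calg[OF poset_I_c] by blast

end
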